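(* Let $r\in\mathbb{N}$. There is a constant $c_3>0$ depending only on $r$ such that for every $b\in(0,\pi]$, every $n\in\mathbb{N}$, every trigonometric polynomial $T_n\in\mathcal{T}_n$ satisfying $tT_n^{(r+1)}(t)\ge 0$ for $|t|\le b$, and every algebraic polynomial $P_r$ of degree $\le r$, $$n\|F_r+P_r-T_n\|_{[-b,b]}\ge c_3 b^r,$$ where $F_r(x):=\frac{1}{r!}|x|x^{r-1}$.
   Context: $\mathcal{T}_n$ is the space of real trigonometric polynomials of degree $\le n$. For a function $g$ on $[a,b]$, $\|g\|_{[a,b]}:=\max_{x\in[a,b]}|g(x)|$. *)

theory Defs
  imports "HOL-Analysis.Analysis" "HOL-Computational_Algebra.Polynomial"
begin

definition trig_poly :: "nat \<Rightarrow> (real \<Rightarrow> real) \<Rightarrow> bool" where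
  "trig_poly n T \<longleftrightarrow> (\<exists>a b :: nat \<Rightarrow> real. \<forall>x.
      T x = a 0 + (\<Sum>k=1..n. a k * cos (real k * x) + b k * sin (real k * x)))"

definition sup_norm_on :: "real \<Rightarrow> real \<Rightarrow> (real \<Rightarrow> real) \<Rightarrow> real" where
  "sup_norm_on a b g = (SUP x\<in>{a..b}. \<bar>g x\<bar>)"

definition F :: "nat \<Rightarrow> real \<Rightarrow> real" where
  "F r x = \<bar>x\<bar> * x ^ (r - 1) / fact r"

end

theory Submission
  imports Defs "HOL-Complex_Analysis.Complex_Analysis"
begin

text \<open>Let \<open>G = F\<^sub>r + P\<^sub>r - T\<^sub>n\<close> have sup norm \<open>\<epsilon>\<close> on \<open>[-b, b]\<close>. On \<open>[-b, 0]\<close> and on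
  \<open>[0, b]\<close> it coincides with the smooth functions \<open>P\<^sub>r \<mp> x\<^sup>r/r! - T\<^sub>n\<close>, whose
  \<open>(r-1)\<close>-st derivatives differ by the corner \<open>2x\<close>. Finite differences of order \<open>r\<close> and step
  \<open>h = b/(4r)\<close> show that the \<open>r\<close>-th derivative \<open>V\<close> of the left branch is \<open>\<ge> -\<eta>\<close> on
  \<open>[-b/2, 0]\<close> and \<open>\<ge> -2 - \<eta>\<close> on \<open>[0, b/2]\<close>, where \<open>\<eta> = 2\<^sup>r \<epsilon> / h\<^sup>r\<close>; the
  sign hypothesis makes \<open>V\<close>, a constant minus the \<open>r\<close>-th derivative of \<open>T\<^sub>n\<close>, increase
  up to \<open>0\<close> and decrease after it.
  So if \<open>\<eta>\<close> is small, \<open>V\<close> has to drop by almost \<open>2\<close> right of \<open>0\<close>, and a local Bernstein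
  inequality (via the substitution \<open>s = sin (x/2)\<close> and Cauchy's estimate for algebraic
  polynomials) keeps \<open>V \<ge> -1\<close> on \<open>[0, b/(660 n)]\<close>. Integrated once, this gives the
  \<open>(r-1)\<close>-st derivatives a gain of \<open>b/(660 n)\<close> over the corner, which finite differences of
  order \<open>r - 1\<close> can only absorb if \<open>h\<^sup>r \<le> C n \<epsilon>\<close>.\<close>

lemma DERIV_ge_imp_diff_ge:
  fixes f f' :: "real \<Rightarrow> real"
  assumes "a \<le> b"
    and der: "\<And>t. a \<le> t \<Longrightarrow> t \<le> b \<Longrightarrow> (f has_real_derivative f' t) (at t)"
    and ge: "\<And>t. a < t \<Longrightarrow> t < b \<Longrightarrow> m \<le> f' t"
  shows "m * (b - a) \<le> f b - f a"
proof (cases "a = b")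
  case False
  with \<open>a \<le> b\<close> have "a < b" by simp
  from MVT2[OF this der] obtain z where "a < z" "z < b" "f b - f a = (b - a) * f' z"
    by blast
  with ge[of z] \<open>a < b\<close> show ?thesis by (simp add: mult.commute mult_left_mono)
qed simp

lemma DERIV_le_imp_diff_le:
  fixes f f' :: "real \<Rightarrow> real"
  assumes "a \<le> b"
    and der: "\<And>t. a \<le> t \<Longrightarrow> t \<le> b \<Longrightarrow> (f has_real_derivative f' t) (at t)"
    and le: "\<And>t. a < t \<Longrightarrow> t < b \<Longrightarrow> f' t \<le> m"
  shows "f b - f a \<le> m * (b - a)"
proof -
  have "(- m) * (b - a) \<le> (- f b) - (- f a)"
    using \<open>a \<le> b\<close> by (rule DERIV_ge_imp_diff_ge) (auto intro: derivative_intros der le)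
  then show ?thesis by simp
qed

lemma mono_on_antimono_on_of_deriv_sign:
  fixes f f' :: "real \<Rightarrow> real"
  assumes der: "\<And>x. (f has_real_derivative f' x) (at x)"
    and sign: "\<And>t. \<bar>t\<bar> \<le> b \<Longrightarrow> t * f' t \<le> 0"
  shows "mono_on {-b..0} f" and "antimono_on {0..b} f"
proof -
  show "mono_on {-b..0} f"
  proof (rule mono_onI)
    fix x y assume xy: "x \<in> {-b..0}" "y \<in> {-b..0}" "x \<le> y"
    have "0 * (y - x) \<le> f y - f x"
    proof (rule DERIV_ge_imp_diff_ge[OF \<open>x \<le> y\<close> der])
      fix t assume "x < t" "t < y"
      with xy sign[of t] show "0 \<le> f' t" by (auto simp: mult_le_0_iff)
    qed
    then show "f x \<le> f y" by simp
  qed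
  show "antimono_on {0..b} f"
  proof (rule monotone_onI)
    fix x y assume xy: "x \<in> {0..b}" "y \<in> {0..b}" "x \<le> y"
    have "f y - f x \<le> 0 * (y - x)"
    proof (rule DERIV_le_imp_diff_le[OF \<open>x \<le> y\<close> der])
      fix t assume "x < t" "t < y"
      with xy sign[of t] show "f' t \<le> 0" by (auto simp: mult_le_0_iff)
    qed
    then show "f y \<le> f x" by simp
  qed
qed

lemma cos_ge_half: "\<bar>x\<bar> \<le> pi / 3 \<Longrightarrow> 1 / 2 \<le> cos x"
  using cos_monotone_0_pi_le[of "\<bar>x\<bar>" "pi / 3"] by (simp add: cos_60)

lemma sin_ge_half_self:
  assumes "0 \<le> x" "x \<le> pi / 3"
  shows "x / 2 \<le> sin x"
proof -
  have "1 / 2 * (x - 0) \<le> sin x - sin 0"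
    using assms by (intro DERIV_ge_imp_diff_ge[where f' = cos] DERIV_sin cos_ge_half) auto
  then show ?thesis by simp
qed

lemma one_minus_cos_le: "0 \<le> x \<Longrightarrow> 1 - cos x \<le> (x::real)"
  using DERIV_ge_imp_diff_ge[of 0 x cos "\<lambda>t. - sin t" "- 1"]
  by (auto intro: derivative_intros)

section \<open>Algebraic polynomials\<close>

lemma poly_map_poly_of_real:
  "poly (map_poly of_real p) (of_real x :: 'a :: real_field) = of_real (poly p x)"
  by (induction p) (auto simp: map_poly_pCons)

lemma pderiv_map_poly_of_real:
  "pderiv (map_poly (of_real :: real \<Rightarrow> 'a :: real_field) p) = map_poly of_real (pderiv p)"
  by (rule poly_eqI) (simp add: coeff_pderiv coeff_map_poly)

lemma poly_altdef_le:
  fixes p :: "'a :: comm_semiring_1 poly"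
  assumes "degree p \<le> m"
  shows "poly p x = (\<Sum>k\<le>m. coeff p k * x ^ k)"
proof -
  have "poly p x = (\<Sum>k\<le>degree p. coeff p k * x ^ k)" by (rule poly_altdef)
  also have "\<dots> = (\<Sum>k\<le>m. coeff p k * x ^ k)"
    by (rule sum.mono_neutral_left) (use assms in \<open>auto simp: coeff_eq_0\<close>)
  finally show ?thesis .
qed

lemma poly_joukowski_eq:
  fixes p :: "'a :: field_char_0 poly"
  assumes "degree p \<le> m" and "w \<noteq> 0"
  shows "w ^ m * poly p ((w + 1 / w) / 2) = (\<Sum>k\<le>m. coeff p k * (w\<^sup>2 + 1) ^ k * w ^ (m - k) / 2 ^ k)"
proof -
  have "w ^ m * ((w + 1 / w) / 2) ^ k = (w\<^sup>2 + 1) ^ k * w ^ (m - k) / 2 ^ k" if "k \<le> m" for k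
  proof -
    have "w ^ m = w ^ (m - k) * w ^ k"
      using \<open>k \<le> m\<close> by (simp flip: power_add)
    then have "w ^ m * ((w + 1 / w) / 2) ^ k = w ^ (m - k) * (w * ((w + 1 / w) / 2)) ^ k"
      by (simp only: power_mult_distrib mult.assoc)
    also have "w * ((w + 1 / w) / 2) = (w\<^sup>2 + 1) / 2"
      using \<open>w \<noteq> 0\<close> by (simp add: field_simps power2_eq_square)
    finally show ?thesis by (simp add: power_divide)
  qed
  then show ?thesis
    by (simp add: poly_altdef_le[OF assms(1)] sum_distrib_left mult_ac)
qed

text \<open>The Joukowski map \<open>w \<mapsto> (w + 1/w)/2\<close> sends the unit circle onto \<open>[-1, 1]\<close>, and
  \<open>w\<^sup>m p((w + 1/w)/2)\<close> is a polynomial in \<open>w\<close>; the maximum modulus principle does the rest.\<close>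
lemma norm_joukowski_poly_le:
  fixes p :: "real poly" and w :: complex
  assumes deg: "degree p \<le> m" and bnd: "\<And>y. -1 \<le> y \<Longrightarrow> y \<le> 1 \<Longrightarrow> \<bar>poly p y\<bar> \<le> M"
    and w: "w \<noteq> 0" "norm w \<le> 1"
  shows "norm (w ^ m * poly (map_poly of_real p) ((w + 1 / w) / 2)) \<le> M"
proof -
  define pc where "pc = map_poly (of_real :: real \<Rightarrow> complex) p"
  have degc: "degree pc \<le> m" using deg by (simp add: pc_def degree_map_poly)
  define q where "q w = (\<Sum>k\<le>m. coeff pc k * (w\<^sup>2 + 1) ^ k * w ^ (m - k) / 2 ^ k)" for w :: complex
  have q_eq: "q w = w ^ m * poly pc ((w + 1 / w) / 2)" if "w \<noteq> 0" for w
    unfolding q_def using poly_joukowski_eq[OF degc that] by simp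
  have hol: "q holomorphic_on A" for A
    unfolding q_def by (intro holomorphic_intros) auto
  have circle: "norm (q z) \<le> M" if "norm z = 1" for z
  proof -
    have "z * cnj z = 1" using complex_norm_square[of z] that by simp
    moreover have z0: "z \<noteq> 0" using that by auto
    ultimately have "1 / z = cnj z" by (simp add: field_simps)
    then have "(z + 1 / z) / 2 = of_real (Re z)" by (simp add: complex_add_cnj)
    then have "norm (q z) = \<bar>poly p (Re z)\<bar>"
      using q_eq[OF z0] that by (auto simp: pc_def poly_map_poly_of_real norm_mult norm_power)
    also have "\<dots> \<le> M" using abs_Re_le_cmod[of z] that by (intro bnd) auto
    finally show ?thesis .
  qed
  have "norm (q w) \<le> M"
  proof (rule maximum_modulus_frontier[of q "cball 0 1"])
    show "continuous_on (closure (cball 0 1)) q"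
      using hol[of UNIV] holomorphic_on_imp_continuous_on continuous_on_subset by blast
  qed (use w hol circle in auto)
  then show ?thesis using q_eq[OF \<open>w \<noteq> 0\<close>] by (simp add: pc_def)
qed

lemma norm_poly_cos_le:
  fixes p :: "real poly"
  assumes deg: "degree p \<le> m" and bnd: "\<And>y. -1 \<le> y \<Longrightarrow> y \<le> 1 \<Longrightarrow> \<bar>poly p y\<bar> \<le> M"
  shows "norm (poly (map_poly of_real p) (cos z)) \<le> M * exp (m * \<bar>Im z\<bar>)"
proof -
  have upper: "norm (poly (map_poly of_real p) (cos z)) \<le> M * exp (m * Im z)"
    if "0 \<le> Im z" for z
  proof -
    define w where "w = exp (\<i> * z)"
    have "w \<noteq> 0" "norm w = exp (- Im z)" by (simp_all add: w_def)
    moreover have "(w + 1 / w) / 2 = cos z"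
      by (simp add: w_def cos_exp_eq exp_minus inverse_eq_divide)
    ultimately have "exp (- Im z) ^ m * norm (poly (map_poly of_real p) (cos z)) \<le> M"
      using norm_joukowski_poly_le[OF deg bnd, of w] that by (simp add: norm_mult norm_power)
    then show ?thesis
      by (simp add: exp_minus power_inverse field_simps flip: exp_of_nat_mult)
  qed
  show ?thesis
    using upper[of z] upper[of "- z"] by (cases "0 \<le> Im z") auto
qed

text \<open>Cauchy's inequality for \<open>z \<mapsto> p(cos z)\<close> on the disc of radius \<open>1/m\<close> around
  \<open>arccos y\<close>, where \<open>norm_poly_cos_le\<close> bounds it by \<open>e M\<close>.\<close>
lemma abs_poly_pderiv_le:
  fixes p :: "real poly"
  assumes "m \<ge> 1" and deg: "degree p \<le> m"
    and bnd: "\<And>y. -1 \<le> y \<Longrightarrow> y \<le> 1 \<Longrightarrow> \<bar>poly p y\<bar> \<le> M"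
    and y: "\<bar>y\<bar> \<le> 1 / 2"
  shows "\<bar>poly (pderiv p) y\<bar> \<le> 6 * m * M"
proof -
  define f where "f z = poly (map_poly of_real p) (cos z)" for z :: complex
  define \<theta> where "\<theta> = arccos y"
  have "0 \<le> M" using bnd[of 0] by auto
  have "y\<^sup>2 \<le> (1 / 2)\<^sup>2"
    using y by (metis abs_ge_zero power2_abs power_mono)
  then have "1 / 2 \<le> sqrt (1 - y\<^sup>2)"
    by (intro real_le_rsqrt) (simp add: power2_eq_square)
  have "norm ((deriv ^^ 1) f (of_real \<theta>)) \<le> fact 1 * (M * exp 1) / (1 / real m) ^ 1"
  proof (rule Cauchy_inequality)
    show "f holomorphic_on ball (of_real \<theta>) (1 / real m)"
      unfolding f_def by (intro holomorphic_intros)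
    show "continuous_on (cball (of_real \<theta>) (1 / real m)) f"
      unfolding f_def by (intro continuous_intros)
    fix x :: complex assume "norm (of_real \<theta> - x) = 1 / real m"
    then have "\<bar>Im x\<bar> \<le> 1 / real m" using abs_Im_le_cmod[of "of_real \<theta> - x"] by simp
    then have "m * \<bar>Im x\<bar> \<le> 1" using \<open>m \<ge> 1\<close> by (simp add: field_simps)
    then show "norm (f x) \<le> M * exp 1"
      using norm_poly_cos_le[OF deg bnd, of x] \<open>0 \<le> M\<close> unfolding f_def
      by (meson exp_le_cancel_iff mult_left_mono order_trans)
  qed (use \<open>m \<ge> 1\<close> in simp)
  moreover have "(f has_field_derivative
      poly (pderiv (map_poly of_real p)) (cos (of_real \<theta>)) * - sin (of_real \<theta>)) (at (of_real \<theta>))"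
    unfolding f_def by (rule DERIV_chain2[OF poly_DERIV DERIV_cos])
  then have "deriv f (of_real \<theta>) = of_real (poly (pderiv p) y * - sqrt (1 - y\<^sup>2))"
    using y by (simp add: DERIV_imp_deriv cos_of_real sin_of_real \<theta>_def sin_arccos
        pderiv_map_poly_of_real poly_map_poly_of_real)
  moreover have "\<bar>sqrt (1 - y\<^sup>2)\<bar> = sqrt (1 - y\<^sup>2)"
    using \<open>1 / 2 \<le> sqrt (1 - y\<^sup>2)\<close> by linarith
  ultimately have "\<bar>poly (pderiv p) y\<bar> * sqrt (1 - y\<^sup>2) \<le> M * exp 1 * m"
    by (simp add: norm_mult)
  moreover have "M * exp 1 * m \<le> M * 3 * m"
    using e_less_272 \<open>0 \<le> M\<close> by (intro mult_right_mono mult_left_mono) auto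
  ultimately have "\<bar>poly (pderiv p) y\<bar> * (1 / 2) \<le> M * 3 * m"
    using mult_left_mono[OF \<open>1 / 2 \<le> sqrt (1 - y\<^sup>2)\<close>, of "\<bar>poly (pderiv p) y\<bar>"] by linarith
  then show ?thesis by (simp add: mult_ac)
qed

lemma abs_poly_diff_le:
  fixes p :: "real poly"
  assumes "m \<ge> 1" and deg: "degree p \<le> m" and "0 < \<sigma>"
    and bnd: "\<And>y. \<bar>y\<bar> \<le> \<sigma> \<Longrightarrow> \<bar>poly p y\<bar> \<le> M"
    and x: "\<bar>x\<bar> \<le> \<sigma> / 2"
  shows "\<bar>poly p x - poly p 0\<bar> \<le> 6 * m * M * \<bar>x\<bar> / \<sigma>"
proof -
  define q where "q = pcompose p [:0, \<sigma>:]"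
  have q: "poly q y = poly p (\<sigma> * y)" for y by (simp add: q_def poly_pcompose mult.commute)
  have "degree q \<le> m" using deg by (simp add: q_def degree_pcompose)
  moreover have "\<bar>poly q y\<bar> \<le> M" if "-1 \<le> y" "y \<le> 1" for y
    using that \<open>0 < \<sigma>\<close> by (auto simp: q abs_mult intro!: bnd mult_left_le)
  ultimately have "\<bar>poly (pderiv q) y\<bar> \<le> 6 * m * M" if "y \<in> {-1/2..1/2}" for y
    using that abs_poly_pderiv_le[OF \<open>m \<ge> 1\<close>] by auto
  then have "norm (poly q (x / \<sigma>) - poly q 0) \<le> 6 * m * M * norm (x / \<sigma> - 0)"
    using x \<open>0 < \<sigma>\<close>
    by (intro field_differentiable_bound[of "{-1/2..1/2}"])
       (auto intro: DERIV_subset[OF poly_DERIV] simp: abs_divide field_simps)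
  then show ?thesis using \<open>0 < \<sigma>\<close> by (simp add: q abs_divide)
qed

lemma higher_pderiv_monom_inverse_fact:
  assumes "j \<le> m"
  shows "(pderiv ^^ j) (monom (1 / fact m) m :: 'a :: field_char_0 poly) = monom (1 / fact (m - j)) (m - j)"
  using assms
proof (induction j)
  case 0
  then show ?case by simp
next
  case (Suc j)
  then have "m - j = Suc (m - Suc j)" by simp
  with Suc show ?case by (simp add: pderiv_monom)
qed

lemma poly_higher_pderiv_add_monom:
  fixes P :: "'a :: field_char_0 poly" and k :: nat
  defines "K \<equiv> monom (1 / fact (Suc k)) (Suc k)"
  shows "poly ((pderiv ^^ k) (P + K)) x = poly ((pderiv ^^ k) (P - K)) x + 2 * x"
proof -
  have "P + K = (P - K) + smult 2 K" by (rule poly_eqI) simp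
  then have "(pderiv ^^ k) (P + K) = (pderiv ^^ k) (P - K) + smult 2 ((pderiv ^^ k) K)"
    by (simp only: higher_pderiv_add higher_pderiv_smult)
  moreover have "(pderiv ^^ k) K = monom 1 1"
    using higher_pderiv_monom_inverse_fact[of k "Suc k"] by (simp add: K_def)
  ultimately show ?thesis by (simp add: poly_monom)
qed

lemma higher_pderiv_eq_0:
  fixes p :: "'a :: {comm_semiring_1, semiring_no_zero_divisors} poly"
  assumes "degree p < j"
  shows "(pderiv ^^ j) p = 0"
  using assms by (intro poly_eqI) (simp add: coeff_higher_pderiv coeff_eq_0)

lemma higher_pderiv_degree_le_const:
  fixes p :: "'a :: {comm_semiring_1, semiring_no_zero_divisors} poly"
  assumes "degree p \<le> j"
  shows "(pderiv ^^ j) p = [:coeff ((pderiv ^^ j) p) 0:]"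
  using assms by (intro poly_eqI) (auto simp: coeff_higher_pderiv coeff_eq_0 coeff_pCons split: nat.split)

section \<open>Trigonometric polynomials\<close>

lemma trig_poly_affine:
  assumes "trig_poly n T"
  shows "trig_poly n (\<lambda>x. c * T x + d)"
proof -
  from assms obtain a b where T: "\<And>x. T x = a 0 + (\<Sum>k=1..n. a k * cos (real k * x) + b k * sin (real k * x))"
    unfolding trig_poly_def by blast
  show ?thesis
    unfolding trig_poly_def
    by (rule exI[of _ "\<lambda>k. if k = 0 then c * a 0 + d else c * a k"], rule exI[of _ "\<lambda>k. c * b k"])
       (simp add: T sum_distrib_left algebra_simps)
qed

lemma trig_poly_periodic:
  assumes "trig_poly n T"
  shows "T (x + 2 * pi) = T x"
proof -
  have "cos (real k * (x + 2 * pi)) = cos (real k * x)" "sin (real k * (x + 2 * pi)) = sin (real k * x)"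
    for k
  proof -
    have "real k * (x + 2 * pi) = real k * x + 2 * real k * pi" by (simp add: algebra_simps)
    then show "cos (real k * (x + 2 * pi)) = cos (real k * x)"
      and "sin (real k * (x + 2 * pi)) = sin (real k * x)"
      by (simp_all add: cos_add sin_add)
  qed
  with assms show ?thesis unfolding trig_poly_def by auto
qed

lemma trig_poly_deriv:
  assumes "trig_poly n T"
  shows "trig_poly n (deriv T)" and "(T has_real_derivative deriv T x) (at x)"
proof -
  from assms obtain a b where T: "T = (\<lambda>x. a 0 + (\<Sum>k=1..n. a k * cos (real k * x) + b k * sin (real k * x)))"
    unfolding trig_poly_def by blast
  define T' where "T' x = 0 + (\<Sum>k=1..n. (real k * b k) * cos (real k * x) + (- real k * a k) * sin (real k * x))" for x
  have der: "(T has_real_derivative T' x) (at x)" for x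
    unfolding T T'_def by (auto intro!: derivative_eq_intros sum.cong)
  then have "deriv T = T'" by (auto intro: DERIV_imp_deriv)
  then show "trig_poly n (deriv T)"
    unfolding trig_poly_def T'_def
    by (intro exI[of _ "\<lambda>k. real k * b k"] exI[of _ "\<lambda>k. - real k * a k"]) simp
  show "(T has_real_derivative deriv T x) (at x)" using der \<open>deriv T = T'\<close> by simp
qed

lemma trig_poly_higher_deriv:
  assumes "trig_poly n T"
  shows "trig_poly n ((deriv ^^ k) T)"
    and "((deriv ^^ k) T has_real_derivative (deriv ^^ Suc k) T x) (at x)"
proof -
  show *: "trig_poly n ((deriv ^^ k) T)" for k
    by (induction k) (simp_all add: assms trig_poly_deriv(1))
  show "((deriv ^^ k) T has_real_derivative (deriv ^^ Suc k) T x) (at x)"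
    using trig_poly_deriv(2)[OF *] by simp
qed

lemma trig_poly_continuous: "trig_poly n T \<Longrightarrow> continuous_on A T"
  by (meson DERIV_isCont continuous_at_imp_continuous_on trig_poly_deriv(2))

text \<open>Every \<open>T \<in> \<T>\<^sub>k\<close> has this form, which turns local estimates for \<open>T\<close> near \<open>0\<close> into
  estimates for algebraic polynomials near \<open>0\<close>.\<close>
definition half_angle_poly :: "nat \<Rightarrow> (real \<Rightarrow> real) \<Rightarrow> bool" where
  "half_angle_poly k f \<longleftrightarrow> (\<exists>A B :: real poly. degree A \<le> 3 * k \<and> degree B \<le> 3 * k \<and>
      (\<forall>x. f x = poly A (sin (x / 2)) + cos (x / 2) * poly B (sin (x / 2))))"

lemma half_angle_poly_mono: "half_angle_poly k f \<Longrightarrow> k \<le> l \<Longrightarrow> half_angle_poly l f"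
  unfolding half_angle_poly_def by (meson le_trans mult_le_mono2)

lemma half_angle_poly_const: "half_angle_poly k (\<lambda>x. c)"
  unfolding half_angle_poly_def by (intro exI[of _ "[:c:]"] exI[of _ 0]) auto

lemma half_angle_poly_add:
  assumes "half_angle_poly k f" "half_angle_poly k g"
  shows "half_angle_poly k (\<lambda>x. f x + g x)"
proof -
  from assms obtain A B A' B' :: "real poly" where
    "degree A \<le> 3 * k" "degree B \<le> 3 * k" "\<forall>x. f x = poly A (sin (x / 2)) + cos (x / 2) * poly B (sin (x / 2))"
    "degree A' \<le> 3 * k" "degree B' \<le> 3 * k" "\<forall>x. g x = poly A' (sin (x / 2)) + cos (x / 2) * poly B' (sin (x / 2))"
    unfolding half_angle_poly_def by metis
  then show ?thesis
    unfolding half_angle_poly_def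
    by (intro exI[of _ "A + A'"] exI[of _ "B + B'"]) (auto intro: degree_add_le simp: algebra_simps)
qed

lemma half_angle_poly_cmult:
  assumes "half_angle_poly k f"
  shows "half_angle_poly k (\<lambda>x. c * f x)"
proof -
  from assms obtain A B :: "real poly" where
    "degree A \<le> 3 * k" "degree B \<le> 3 * k" "\<forall>x. f x = poly A (sin (x / 2)) + cos (x / 2) * poly B (sin (x / 2))"
    unfolding half_angle_poly_def by metis
  then show ?thesis
    unfolding half_angle_poly_def
    by (intro exI[of _ "smult c A"] exI[of _ "smult c B"]) (auto simp: algebra_simps)
qed

lemma half_angle_poly_cos_mult:
  assumes "half_angle_poly k f"
  shows "half_angle_poly (Suc k) (\<lambda>x. cos x * f x)"
proof -
  from assms obtain A B :: "real poly" where deg: "degree A \<le> 3 * k" "degree B \<le> 3 * k"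
    and f: "\<And>x. f x = poly A (sin (x / 2)) + cos (x / 2) * poly B (sin (x / 2))"
    unfolding half_angle_poly_def by metis
  have "cos x * f x = poly ([:1, 0, -2:] * A) (sin (x / 2)) + cos (x / 2) * poly ([:1, 0, -2:] * B) (sin (x / 2))"
    for x
  proof -
    have c: "cos x = poly [:1, 0, -2:] (sin (x / 2))"
      using cos_double_sin[of "x / 2"] by (simp add: power2_eq_square)
    show ?thesis unfolding c by (simp add: f algebra_simps)
  qed
  moreover have "degree ([:1, 0, -2:] * A) \<le> 3 * Suc k" "degree ([:1, 0, -2:] * B) \<le> 3 * Suc k"
    using degree_mult_le[of "[:1, 0, -2:]" A] degree_mult_le[of "[:1, 0, -2:]" B] deg by simp_all
  ultimately show ?thesis
    unfolding half_angle_poly_def by blast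
qed

lemma half_angle_poly_sin_mult:
  assumes "half_angle_poly k f"
  shows "half_angle_poly (Suc k) (\<lambda>x. sin x * f x)"
proof -
  from assms obtain A B :: "real poly" where deg: "degree A \<le> 3 * k" "degree B \<le> 3 * k"
    and f: "\<And>x. f x = poly A (sin (x / 2)) + cos (x / 2) * poly B (sin (x / 2))"
    unfolding half_angle_poly_def by metis
  have "sin x * f x = poly ([:0, 2, 0, -2:] * B) (sin (x / 2)) + cos (x / 2) * poly ([:0, 2:] * A) (sin (x / 2))"
    for x
  proof -
    have "sin x = 2 * sin (x / 2) * cos (x / 2)" using sin_double[of "x / 2"] by simp
    then have "sin x * f x = 2 * sin (x / 2) * cos (x / 2) * poly A (sin (x / 2))
        + 2 * sin (x / 2) * (cos (x / 2))\<^sup>2 * poly B (sin (x / 2))"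
      by (simp add: f algebra_simps power2_eq_square)
    also have "(cos (x / 2))\<^sup>2 = 1 - (sin (x / 2))\<^sup>2" by (rule cos_squared_eq)
    finally show ?thesis by (simp add: algebra_simps power2_eq_square power3_eq_cube)
  qed
  moreover have "degree ([:0, 2, 0, -2:] * B) \<le> 3 * Suc k" "degree ([:0, 2:] * A) \<le> 3 * Suc k"
    using degree_mult_le[of "[:0, 2, 0, -2:]" B] degree_mult_le[of "[:0, 2:]" A] deg by simp_all
  ultimately show ?thesis
    unfolding half_angle_poly_def by blast
qed

lemma half_angle_poly_cos_sin_multiple:
  "half_angle_poly k (\<lambda>x. cos (real k * x)) \<and> half_angle_poly k (\<lambda>x. sin (real k * x))"
proof (induction k)
  case 0
  show ?case using half_angle_poly_const[of 0 1] half_angle_poly_const[of 0 0] by simp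
next
  case (Suc k)
  have cos: "cos (real (Suc k) * x) = cos x * cos (real k * x) + (-1) * (sin x * sin (real k * x))"
    and sin: "sin (real (Suc k) * x) = sin x * cos (real k * x) + cos x * sin (real k * x)" for x
    by (simp_all add: distrib_right cos_add sin_add)
  show ?case
    unfolding cos sin using Suc
    by (intro conjI half_angle_poly_add half_angle_poly_cmult half_angle_poly_cos_mult
        half_angle_poly_sin_mult) auto
qed

lemma trig_poly_imp_half_angle_poly:
  assumes "trig_poly n T"
  shows "half_angle_poly n T"
proof -
  from assms obtain a b where T: "T = (\<lambda>x. a 0 + (\<Sum>k=1..n. a k * cos (real k * x) + b k * sin (real k * x)))"
    unfolding trig_poly_def by blast
  have "half_angle_poly m (\<lambda>x. a 0 + (\<Sum>k=1..m. a k * cos (real k * x) + b k * sin (real k * x)))" for m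
  proof (induction m)
    case 0
    show ?case by (simp add: half_angle_poly_const)
  next
    case (Suc m)
    have "(\<lambda>x. a 0 + (\<Sum>k=1..Suc m. a k * cos (real k * x) + b k * sin (real k * x)))
      = (\<lambda>x. (a 0 + (\<Sum>k=1..m. a k * cos (real k * x) + b k * sin (real k * x)))
          + (a (Suc m) * cos (real (Suc m) * x) + b (Suc m) * sin (real (Suc m) * x)))"
      by (simp add: fun_eq_iff)
    then show ?case
      using half_angle_poly_cos_sin_multiple[of "Suc m"]
      by (simp only:) (rule half_angle_poly_add[OF half_angle_poly_mono[OF Suc.IH]],
          auto intro!: half_angle_poly_add half_angle_poly_cmult)
  qed
  then show ?thesis unfolding T .
qed

text \<open>Reflecting \<open>x \<mapsto> 2\<pi> - x\<close> fixes \<open>sin (x/2)\<close> and flips \<open>cos (x/2)\<close>, so \<open>A\<close> and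
  \<open>cos (x/2) B\<close> are the even and odd parts of \<open>S\<close>.\<close>
lemma half_angle_parts_bounded:
  fixes S :: "real \<Rightarrow> real" and A B :: "real poly"
  assumes S: "\<And>x. S x = poly A (sin (x / 2)) + cos (x / 2) * poly B (sin (x / 2))"
    and periodic: "\<And>x. S (x + 2 * pi) = S x"
    and \<beta>: "0 < \<beta>" "\<beta> \<le> pi / 2" and bnd: "\<And>x. \<bar>x\<bar> \<le> \<beta> \<Longrightarrow> \<bar>S x\<bar> \<le> M"
    and y: "\<bar>y\<bar> \<le> sin (\<beta> / 2)"
  shows "\<bar>poly A y\<bar> \<le> M" and "\<bar>poly B y\<bar> \<le> 2 * M"
proof -
  define x where "x = 2 * arcsin y"
  have "\<bar>y\<bar> \<le> 1" using y sin_le_one[of "\<beta> / 2"] by linarith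
  then have y1: "-1 \<le> y" "y \<le> 1" by auto
  have "arcsin \<bar>y\<bar> \<le> \<beta> / 2"
    using y y1 arcsin_le_arcsin[of "\<bar>y\<bar>" "sin (\<beta> / 2)"] arcsin_sin[of "\<beta> / 2"] \<beta> by auto
  moreover have "arcsin y \<le> arcsin \<bar>y\<bar>" "arcsin (- y) \<le> arcsin \<bar>y\<bar>"
    using y1 by (auto intro!: arcsin_le_arcsin)
  ultimately have "\<bar>x / 2\<bar> \<le> \<beta> / 2"
    using y1 by (auto simp: x_def arcsin_minus)
  then have x: "\<bar>x\<bar> \<le> \<beta>" by simp
  have cos_x: "1 / 2 \<le> cos (x / 2)"
    using \<open>\<bar>x / 2\<bar> \<le> \<beta> / 2\<close> \<beta> pi_gt_zero by (intro cos_ge_half) linarith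
  have sin_x: "sin (x / 2) = y" using y1 by (simp add: x_def)
  have half: "(2 * pi - x) / 2 = pi - x / 2" by simp
  have "S (2 * pi - x) = poly A y - cos (x / 2) * poly B y"
    by (simp only: S half) (simp add: sin_x)
  then have "S (- x) = poly A y - cos (x / 2) * poly B y"
    using periodic[of "- x"] by simp
  moreover have "S x = poly A y + cos (x / 2) * poly B y" by (simp add: S sin_x)
  moreover have "\<bar>S x\<bar> \<le> M" "\<bar>S (- x)\<bar> \<le> M" using bnd x by auto
  ultimately have "\<bar>poly A y\<bar> \<le> M" and "cos (x / 2) * \<bar>poly B y\<bar> \<le> M"
    using cos_x by (auto simp: abs_mult abs_le_iff)
  moreover have "1 / 2 * \<bar>poly B y\<bar> \<le> cos (x / 2) * \<bar>poly B y\<bar>"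
    using cos_x by (intro mult_right_mono) auto
  ultimately show "\<bar>poly A y\<bar> \<le> M" and "\<bar>poly B y\<bar> \<le> 2 * M" by auto
qed

lemma half_angle_increment_le:
  fixes A B :: "real poly"
  assumes S: "\<And>x. S x = poly A (sin (x / 2)) + cos (x / 2) * poly B (sin (x / 2))"
    and t: "0 \<le> t" "t \<le> pi"
  shows "\<bar>S t - S 0\<bar> \<le> \<bar>poly A (sin (t / 2)) - poly A 0\<bar> + \<bar>poly B (sin (t / 2)) - poly B 0\<bar>
    + t / 2 * \<bar>poly B 0\<bar>"
proof -
  define c where "c = cos (t / 2)"
  have c: "0 \<le> c" "c \<le> 1" "1 - c \<le> t / 2"
    unfolding c_def using t one_minus_cos_le[of "t / 2"] by (auto intro!: cos_ge_zero)
  have "S t - S 0 = (poly A (sin (t / 2)) - poly A 0) + c * (poly B (sin (t / 2)) - poly B 0)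
      + (c - 1) * poly B 0"
    by (simp add: S c_def algebra_simps)
  moreover have "\<bar>c * (poly B (sin (t / 2)) - poly B 0)\<bar> \<le> \<bar>poly B (sin (t / 2)) - poly B 0\<bar>"
    using c by (simp add: abs_mult mult_left_le_one_le)
  moreover have "\<bar>(c - 1) * poly B 0\<bar> = (1 - c) * \<bar>poly B 0\<bar>"
    using c by (simp add: abs_mult)
  moreover have "(1 - c) * \<bar>poly B 0\<bar> \<le> t / 2 * \<bar>poly B 0\<bar>"
    using c by (intro mult_right_mono) auto
  ultimately show ?thesis by (smt (verit))
qed

lemma trig_poly_increment_le:
  assumes "n \<ge> 1" "0 < \<beta>" "\<beta> \<le> pi / 2" "trig_poly n S"
    and bnd: "\<And>x. \<bar>x\<bar> \<le> \<beta> \<Longrightarrow> \<bar>S x\<bar> \<le> M" and t: "0 \<le> t" "t \<le> \<beta> / 4"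
  shows "\<bar>S t - S 0\<bar> \<le> 110 * n * t * M / \<beta>"
proof -
  obtain A B :: "real poly" where deg: "degree A \<le> 3 * n" "degree B \<le> 3 * n"
    and S: "\<And>x. S x = poly A (sin (x / 2)) + cos (x / 2) * poly B (sin (x / 2))"
    using trig_poly_imp_half_angle_poly[OF \<open>trig_poly n S\<close>] unfolding half_angle_poly_def by metis
  have "0 \<le> M" using bnd[of 0] \<open>0 < \<beta>\<close> by auto
  define \<sigma> where "\<sigma> = sin (\<beta> / 2)"
  have "\<beta> / 4 \<le> \<sigma>"
    unfolding \<sigma>_def using sin_ge_half_self[of "\<beta> / 2"] assms(2,3) by simp
  define s where "s = sin (t / 2)"
  have s: "0 \<le> s" "s \<le> t / 2"
    unfolding s_def using t assms(2,3) sin_x_le_x[of "t / 2"] by (auto intro!: sin_ge_zero)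
  have "\<bar>y\<bar> \<le> \<sigma> \<Longrightarrow> \<bar>poly A y\<bar> \<le> M" "\<bar>y\<bar> \<le> \<sigma> \<Longrightarrow> \<bar>poly B y\<bar> \<le> 2 * M" for y
    using half_angle_parts_bounded[OF S trig_poly_periodic[OF \<open>trig_poly n S\<close>] assms(2,3) bnd]
    unfolding \<sigma>_def by auto
  moreover have "3 * n \<ge> 1" "0 < \<sigma>" "\<bar>s\<bar> \<le> \<sigma> / 2"
    using \<open>n \<ge> 1\<close> \<open>\<beta> / 4 \<le> \<sigma>\<close> \<open>0 < \<beta>\<close> s t by auto
  ultimately have A: "\<bar>poly A s - poly A 0\<bar> \<le> 18 * n * M * s / \<sigma>"
    and B: "\<bar>poly B s - poly B 0\<bar> \<le> 36 * n * M * s / \<sigma>" and B0: "\<bar>poly B 0\<bar> \<le> 2 * M"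
    using abs_poly_diff_le[of "3 * n" A \<sigma> M s] abs_poly_diff_le[of "3 * n" B \<sigma> "2 * M" s] deg s
    by auto
  have "t \<le> pi" using t assms(3) pi_gt_zero by linarith
  then have "\<bar>S t - S 0\<bar> \<le> \<bar>poly A s - poly A 0\<bar> + \<bar>poly B s - poly B 0\<bar> + t / 2 * \<bar>poly B 0\<bar>"
    using half_angle_increment_le[OF S t(1)] by (simp add: s_def)
  also have "\<dots> \<le> 18 * n * M * s / \<sigma> + 36 * n * M * s / \<sigma> + t / 2 * (2 * M)"
    using A B B0 t by (intro add_mono mult_left_mono) auto
  also have "\<dots> = 54 * n * M * s / \<sigma> + t * M" by (simp add: field_simps)
  also have "\<dots> \<le> 54 * n * M * (t / 2) / (\<beta> / 4) + 2 * n * t * M / \<beta>"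
  proof (rule add_mono)
    show "54 * n * M * s / \<sigma> \<le> 54 * n * M * (t / 2) / (\<beta> / 4)"
      using s \<open>\<beta> / 4 \<le> \<sigma>\<close> \<open>0 < \<beta>\<close> \<open>0 \<le> M\<close> by (intro frac_le mult_left_mono) auto
    have "\<beta> \<le> 2 * n" using assms(1,3) pi_less_4 by linarith
    then have "t * M * \<beta> \<le> t * M * (2 * n)"
      using t \<open>0 \<le> M\<close> by (intro mult_left_mono) auto
    then show "t * M \<le> 2 * n * t * M / \<beta>"
      using \<open>0 < \<beta>\<close> by (simp add: field_simps)
  qed
  also have "\<dots> = 110 * n * t * M / \<beta>" by (simp add: field_simps)
  finally show ?thesis .
qed

section \<open>Forward differences\<close>

fun fwd_diff :: "nat \<Rightarrow> real \<Rightarrow> (real \<Rightarrow> real) \<Rightarrow> real \<Rightarrow> real" where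
  "fwd_diff 0 h f x = f x"
| "fwd_diff (Suc k) h f x = fwd_diff k h (\<lambda>y. f (y + h) - f y) x"

lemma fwd_diff_le_deriv:
  assumes "0 < h" and der: "\<And>j t. (D j has_real_derivative D (Suc j) t) (at t)"
    and le: "\<And>t. x \<le> t \<Longrightarrow> t \<le> x + real k * h \<Longrightarrow> D k t \<le> m"
  shows "fwd_diff k h (D 0) x \<le> m * h ^ k"
  using der le
proof (induction k arbitrary: D m)
  case 0
  then show ?case by simp
next
  case (Suc k)
  define D' where "D' j y = D j (y + h) - D j y" for j y
  have "(D' j has_real_derivative D' (Suc j) t) (at t)" for j t
  proof -
    have "((\<lambda>z. z + h) has_real_derivative 1) (at t)" by (auto intro!: derivative_eq_intros)
    then have "((\<lambda>z. D j (z + h) - D j z) has_real_derivative D (Suc j) (t + h) * 1 - D (Suc j) t) (at t)"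
      by (intro DERIV_diff DERIV_chain2[OF Suc.prems(1)] Suc.prems(1))
    then show ?thesis by (simp add: D'_def[abs_def])
  qed
  moreover have "D' k t \<le> m * h" if "x \<le> t" "t \<le> x + real k * h" for t
  proof -
    have "D k (t + h) - D k t \<le> m * (t + h - t)"
    proof (rule DERIV_le_imp_diff_le)
      show "t \<le> t + h" using \<open>0 < h\<close> by simp
      show "(D k has_real_derivative D (Suc k) u) (at u)" for u by (rule Suc.prems(1))
      fix u assume "t < u" "u < t + h"
      with that show "D (Suc k) u \<le> m" by (intro Suc.prems(2)) (auto simp: algebra_simps)
    qed
    then show ?thesis by (simp add: D'_def)
  qed
  ultimately have "fwd_diff k h (D' 0) x \<le> m * h * h ^ k"
    by (rule Suc.IH)
  then show ?case by (simp add: D'_def[abs_def] mult_ac)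
qed

lemma abs_fwd_diff_le:
  assumes "0 \<le> h" and "\<And>t. x \<le> t \<Longrightarrow> t \<le> x + real k * h \<Longrightarrow> \<bar>f t\<bar> \<le> \<epsilon>"
  shows "\<bar>fwd_diff k h f x\<bar> \<le> 2 ^ k * \<epsilon>"
  using assms(2)
proof (induction k arbitrary: f \<epsilon>)
  case 0
  then show ?case by simp
next
  case (Suc k)
  have "\<bar>fwd_diff k h (\<lambda>y. f (y + h) - f y) x\<bar> \<le> 2 ^ k * (2 * \<epsilon>)"
  proof (rule Suc.IH)
    fix t assume "x \<le> t" "t \<le> x + real k * h"
    then have "\<bar>f (t + h)\<bar> \<le> \<epsilon>" "\<bar>f t\<bar> \<le> \<epsilon>"
      using \<open>0 \<le> h\<close> by (auto intro!: Suc.prems simp: algebra_simps)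
    then show "\<bar>f (t + h) - f t\<bar> \<le> 2 * \<epsilon>" by linarith
  qed
  then show ?case by (simp add: mult_ac)
qed

text \<open>Apply the previous two lemmas at a maximum point of \<open>D k\<close>.\<close>
lemma bounded_deriv_chain_ex_ge:
  assumes "0 < h" and der: "\<And>j t. (D j has_real_derivative D (Suc j) t) (at t)"
    and bnd: "\<And>t. x \<le> t \<Longrightarrow> t \<le> x + real k * h \<Longrightarrow> \<bar>D 0 t\<bar> \<le> \<epsilon>"
  shows "\<exists>t\<in>{x..x + real k * h}. - (2 ^ k * \<epsilon> / h ^ k) \<le> D k t"
proof -
  have "continuous_on {x..x + real k * h} (D k)"
    using der by (meson DERIV_isCont continuous_at_imp_continuous_on)
  then obtain t where t: "t \<in> {x..x + real k * h}" and max: "\<And>s. s \<in> {x..x + real k * h} \<Longrightarrow> D k s \<le> D k t"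
    using continuous_attains_sup[of "{x..x + real k * h}" "D k"] \<open>0 < h\<close> by auto
  have "- (2 ^ k * \<epsilon>) \<le> fwd_diff k h (D 0) x"
    using abs_fwd_diff_le[of h x k "D 0" \<epsilon>] \<open>0 < h\<close> bnd by auto
  also have "\<dots> \<le> D k t * h ^ k"
    using \<open>0 < h\<close> der max by (rule fwd_diff_le_deriv) auto
  finally show ?thesis
    using t \<open>0 < h\<close> by (intro bexI[of _ t]) (auto simp: field_simps)
qed

lemma bounded_deriv_chain_ex_le:
  assumes "0 < h" and der: "\<And>j t. (D j has_real_derivative D (Suc j) t) (at t)"
    and bnd: "\<And>t. x \<le> t \<Longrightarrow> t \<le> x + real k * h \<Longrightarrow> \<bar>D 0 t\<bar> \<le> \<epsilon>"
  shows "\<exists>t\<in>{x..x + real k * h}. D k t \<le> 2 ^ k * \<epsilon> / h ^ k"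
  using bounded_deriv_chain_ex_ge[of h "\<lambda>j t. - D j t" x k \<epsilon>] assms
  by (auto intro: DERIV_minus)

section \<open>Approximating a corner\<close>

text \<open>For \<open>r = k + 1\<close>, \<open>Dm j\<close> and \<open>Dp j\<close> will be the \<open>j\<close>-th derivatives of the two smooth
  branches \<open>P\<^sub>r \<mp> x\<^sup>r/r! - T\<^sub>n\<close> of \<open>F\<^sub>r + P\<^sub>r - T\<^sub>n\<close>, on \<open>[-b, 0]\<close> and \<open>[0, b]\<close>.\<close>
locale kink_approx =
  fixes b h \<epsilon> :: real and n k :: nat and Dm Dp :: "nat \<Rightarrow> real \<Rightarrow> real"
  assumes b: "0 < b" "b \<le> pi" and n: "n \<ge> 1"
    and h: "0 < h" "real (Suc k) * h = b / 4"
    and Dm_deriv: "\<And>j x. (Dm j has_real_derivative Dm (Suc j) x) (at x)"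
    and Dp_deriv: "\<And>j x. (Dp j has_real_derivative Dp (Suc j) x) (at x)"
    and Dm_small: "\<And>x. -b \<le> x \<Longrightarrow> x \<le> 0 \<Longrightarrow> \<bar>Dm 0 x\<bar> \<le> \<epsilon>"
    and Dp_small: "\<And>x. 0 \<le> x \<Longrightarrow> x \<le> b \<Longrightarrow> \<bar>Dp 0 x\<bar> \<le> \<epsilon>"
    and corner: "\<And>x. Dp k x = Dm k x + 2 * x"
    and peak_trig_poly: "trig_poly n (Dm (Suc k))"
    and peak_mono: "mono_on {-b..0} (Dm (Suc k))" "antimono_on {0..b} (Dm (Suc k))"
begin

abbreviation peak :: "real \<Rightarrow> real" where
  "peak \<equiv> Dm (Suc k)"

definition eta :: real where
  "eta = 2 ^ Suc k * \<epsilon> / h ^ Suc k"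

lemma eps_nonneg: "0 \<le> \<epsilon>"
  using Dm_small[of 0] b by auto

lemma eta_nonneg: "0 \<le> eta"
  using eps_nonneg h by (simp add: eta_def)

lemma Dp_Suc: "Dp (Suc k) x = peak x + 2"
proof -
  have "((\<lambda>x. Dp k x - Dm k x) has_real_derivative Dp (Suc k) x - peak x) (at x)"
    by (intro DERIV_diff Dp_deriv Dm_deriv)
  moreover have "((\<lambda>x. Dp k x - Dm k x) has_real_derivative 2) (at x)"
    unfolding corner by (auto intro!: derivative_eq_intros)
  ultimately show ?thesis using DERIV_unique by fastforce
qed

lemma peak_ge_left:
  assumes "-b / 2 \<le> y" "y \<le> 0"
  shows "- eta \<le> peak y"
proof -
  have "\<exists>t\<in>{y - b / 4..y - b / 4 + real (Suc k) * h}. - eta \<le> peak t"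
    unfolding eta_def
  proof (rule bounded_deriv_chain_ex_ge[where D = Dm, OF h(1) Dm_deriv])
    fix t assume "y - b / 4 \<le> t" "t \<le> y - b / 4 + real (Suc k) * h"
    with assms h(2) b show "\<bar>Dm 0 t\<bar> \<le> \<epsilon>" by (intro Dm_small) auto
  qed
  then obtain t where "t \<in> {y - b / 4..y}" "- eta \<le> peak t"
    unfolding h(2) by auto
  moreover have "peak t \<le> peak y"
    using mono_onD[OF peak_mono(1), of t y] calculation(1) assms b by auto
  ultimately show ?thesis by linarith
qed

lemma peak_ge_right:
  assumes "0 \<le> x" "x \<le> b / 2"
  shows "- eta - 2 \<le> peak x"
proof -
  have "\<exists>t\<in>{x..x + real (Suc k) * h}. - eta \<le> Dp (Suc k) t"
    unfolding eta_def
  proof (rule bounded_deriv_chain_ex_ge[where D = Dp, OF h(1) Dp_deriv])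
    fix t assume "x \<le> t" "t \<le> x + real (Suc k) * h"
    with assms h(2) b show "\<bar>Dp 0 t\<bar> \<le> \<epsilon>" by (intro Dp_small) auto
  qed
  then obtain t where "t \<in> {x..x + b / 4}" "- eta \<le> peak t + 2"
    unfolding h(2) Dp_Suc by auto
  moreover have "peak t \<le> peak x"
    using monotone_onD[OF peak_mono(2), of x t] calculation(1) assms b by auto
  ultimately show ?thesis by linarith
qed

lemma peak_bounds:
  assumes "\<bar>x\<bar> \<le> b / 2"
  shows "peak x \<le> peak 0" and "- eta - 2 \<le> peak x"
proof -
  show "peak x \<le> peak 0"
  proof (cases "0 \<le> x")
    case True
    then show ?thesis using monotone_onD[OF peak_mono(2), of 0 x] assms b by auto
  next
    case False
    then show ?thesis using mono_onD[OF peak_mono(1), of x 0] assms b by auto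
  qed
  show "- eta - 2 \<le> peak x"
    using peak_ge_left[of x] peak_ge_right[of x] assms by (cases "0 \<le> x") auto
qed

text \<open>On \<open>[-b/2, b/2]\<close> the trigonometric polynomial \<open>peak\<close> stays in \<open>[peak 0 - \<Lambda>, peak 0]\<close>,
  so by the local Bernstein inequality \<open>trig_poly_increment_le\<close> it moves by at most \<open>\<Lambda>/6\<close>
  on \<open>[0, b/(660 n)]\<close>.\<close>
lemma peak_ge_near_zero:
  assumes "eta \<le> 1 / 2" "0 \<le> t" "t \<le> b / (660 * n)"
  shows "-1 \<le> peak t"
proof -
  define \<Lambda> where "\<Lambda> = peak 0 + 2 + eta"
  define S where "S x = peak x + (\<Lambda> / 2 - peak 0)" for x
  have "- eta \<le> peak 0" using peak_ge_left[of 0] b by simp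
  have "trig_poly n S"
    using trig_poly_affine[OF peak_trig_poly, of 1] by (simp add: S_def[abs_def])
  moreover have "\<bar>S x\<bar> \<le> \<Lambda> / 2" if "\<bar>x\<bar> \<le> b / 2" for x
    using peak_bounds[OF that] unfolding S_def \<Lambda>_def abs_le_iff by (simp add: field_simps)
  moreover have "t \<le> b / 2 / 4"
  proof -
    have "t * 8 \<le> t * (660 * n)" using assms(2) n by (intro mult_left_mono) auto
    also have "\<dots> \<le> b" using assms(3) n by (simp add: field_simps)
    finally show ?thesis by simp
  qed
  ultimately have "\<bar>S t - S 0\<bar> \<le> 110 * n * t * (\<Lambda> / 2) / (b / 2)"
    using n b assms(2) by (intro trig_poly_increment_le) auto
  also have "\<dots> \<le> 110 * n * (b / (660 * n)) * (\<Lambda> / 2) / (b / 2)"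
    using assms(1,3) \<open>- eta \<le> peak 0\<close> b n
    by (intro divide_right_mono mult_right_mono mult_left_mono) (auto simp: \<Lambda>_def)
  also have "\<dots> = \<Lambda> / 6" using b n by (simp add: field_simps)
  finally have "peak 0 - peak t \<le> \<Lambda> / 6"
    using abs_le_D2 by (fastforce simp: S_def)
  then show ?thesis
    using assms(1) \<open>- eta \<le> peak 0\<close> by (simp add: \<Lambda>_def field_simps)
qed

text \<open>Integrate the lower bounds for \<open>peak\<close> from \<open>s\<close> to \<open>t\<close>; near \<open>0\<close> the bound \<open>-1\<close>
  instead of \<open>-2 - eta\<close> gains \<open>b/(660 n)\<close> over the corner.\<close>
lemma corner_gap:
  assumes "eta \<le> 1 / 2" and s: "-b / 2 \<le> s" "s \<le> -b / 4" and t: "b / 4 \<le> t" "t \<le> b / 2"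
  shows "Dm k s + b / (660 * n) - eta * b \<le> Dp k t"
proof -
  define d where "d = b / (660 * n)"
  have d: "0 < d" "d \<le> b / 8" using b n by (auto simp: d_def field_simps)
  have "(- eta) * (0 - s) \<le> Dm k 0 - Dm k s"
    using s b peak_ge_left by (intro DERIV_ge_imp_diff_ge[OF _ Dm_deriv]) auto
  moreover have "(- 1) * (d - 0) \<le> Dm k d - Dm k 0"
    using d assms(1) peak_ge_near_zero unfolding d_def
    by (intro DERIV_ge_imp_diff_ge[OF _ Dm_deriv]) auto
  moreover have "(- eta - 2) * (t - d) \<le> Dm k t - Dm k d"
    using d t peak_ge_right by (intro DERIV_ge_imp_diff_ge[OF _ Dm_deriv]) auto
  moreover have "0 \<le> eta * (s - t + d + b)"
    using eta_nonneg s t d by simp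
  ultimately show ?thesis
    unfolding corner d_def[symmetric] by (simp add: algebra_simps)
qed

lemma corner_gap_bound:
  assumes "eta \<le> 1 / 2"
  shows "b / (660 * n) \<le> 2 * (2 ^ k * \<epsilon> / h ^ k) + eta * b"
proof -
  have kh: "real k * h \<le> b / 4" using h by (simp add: algebra_simps)
  have "\<exists>s\<in>{-b / 2..-b / 2 + real k * h}. - (2 ^ k * \<epsilon> / h ^ k) \<le> Dm k s"
  proof (rule bounded_deriv_chain_ex_ge[where D = Dm, OF h(1) Dm_deriv])
    fix x assume "-b / 2 \<le> x" "x \<le> -b / 2 + real k * h"
    with kh b show "\<bar>Dm 0 x\<bar> \<le> \<epsilon>" by (intro Dm_small) auto
  qed
  moreover have "\<exists>t\<in>{b / 4..b / 4 + real k * h}. Dp k t \<le> 2 ^ k * \<epsilon> / h ^ k"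
  proof (rule bounded_deriv_chain_ex_le[where D = Dp, OF h(1) Dp_deriv])
    fix x assume "b / 4 \<le> x" "x \<le> b / 4 + real k * h"
    with kh b show "\<bar>Dp 0 x\<bar> \<le> \<epsilon>" by (intro Dp_small) auto
  qed
  ultimately obtain s t where s: "s \<in> {-b / 2..-b / 2 + real k * h}" "- (2 ^ k * \<epsilon> / h ^ k) \<le> Dm k s"
    and t: "t \<in> {b / 4..b / 4 + real k * h}" "Dp k t \<le> 2 ^ k * \<epsilon> / h ^ k"
    by blast
  have "Dm k s + b / (660 * n) - eta * b \<le> Dp k t"
    using corner_gap[OF assms, of s t] s(1) t(1) kh by auto
  with s(2) t(2) show ?thesis by (smt (verit))
qed

lemma lower_bound: "h ^ Suc k \<le> 660 * 2 ^ (k + 2) * n * \<epsilon>"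
proof (cases "eta \<le> 1 / 2")
  case False
  then have "h ^ Suc k \<le> 2 * 2 ^ Suc k * \<epsilon>"
    using h by (simp add: eta_def field_simps)
  also have "\<dots> \<le> 660 * 2 ^ (k + 2) * n * \<epsilon>"
    using eps_nonneg n by (intro mult_right_mono) auto
  finally show ?thesis .
next
  case True
  define Z where "Z = 2 ^ k * \<epsilon> / h ^ k"
  have "h * 4 + h * (real k * 4) = b" using h(2) by (simp add: algebra_simps)
  then have "h \<le> b" using h(1) mult_nonneg_nonneg[of h "real k * 4"] by linarith
  then have "1 \<le> b / h" using h(1) by simp
  have "b / (660 * n) \<le> 2 * Z + eta * b"
    using corner_gap_bound[OF True] by (simp add: Z_def)
  moreover have "eta * b = 2 * Z * (b / h)"
    using h by (simp add: eta_def Z_def field_simps)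
  moreover have "2 * Z \<le> 2 * Z * (b / h)"
    using mult_left_mono[OF \<open>1 \<le> b / h\<close>, of "2 * Z"] h eps_nonneg by (simp add: Z_def)
  ultimately have "b / (660 * n) \<le> 4 * Z * b / h" by simp
  then show ?thesis
    using b h n by (simp add: Z_def field_simps)
qed

end

lemma abs_le_sup_norm_on:
  assumes "continuous_on {a..b} g" "x \<in> {a..b}"
  shows "\<bar>g x\<bar> \<le> sup_norm_on a b g"
  unfolding sup_norm_on_def using assms
  by (intro cSUP_upper bounded_imp_bdd_above compact_imp_bounded compact_continuous_image
      continuous_intros) auto

lemma kink_approx_branches:
  fixes k n :: nat and T :: "real \<Rightarrow> real" and P :: "real poly"
  defines "K \<equiv> monom (1 / fact (Suc k)) (Suc k) :: real poly"
  assumes b: "0 < b" "b \<le> pi" and n: "n \<ge> 1" and T: "trig_poly n T"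
    and sign: "\<And>t. \<bar>t\<bar> \<le> b \<Longrightarrow> 0 \<le> t * (deriv ^^ Suc (Suc k)) T t"
    and P: "degree P \<le> Suc k"
    and approx: "\<And>x. \<bar>x\<bar> \<le> b \<Longrightarrow> \<bar>F (Suc k) x + poly P x - T x\<bar> \<le> \<epsilon>"
  shows "kink_approx b (b / (4 * Suc k)) \<epsilon> n k
    (\<lambda>j x. poly ((pderiv ^^ j) (P - K)) x - (deriv ^^ j) T x)
    (\<lambda>j x. poly ((pderiv ^^ j) (P + K)) x - (deriv ^^ j) T x)"
proof -
  define D where "D Q j x = poly ((pderiv ^^ j) Q) x - (deriv ^^ j) T x" for Q j x
  have D_deriv: "(D Q j has_real_derivative D Q (Suc j) x) (at x)" for Q j x
  proof -
    have "(pderiv ^^ Suc j) Q = pderiv ((pderiv ^^ j) Q)" by simp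
    then show ?thesis
      unfolding D_def by (simp only:) (intro DERIV_diff poly_DERIV trig_poly_higher_deriv(2)[OF T])
  qed
  have K: "poly K x = x ^ Suc k / fact (Suc k)" for x
    by (simp add: K_def poly_monom)
  have F: "F (Suc k) x = (if 0 \<le> x then 1 else -1) * x ^ Suc k / fact (Suc k)" for x
    by (simp add: F_def abs_if)
  have corner: "D (P + K) k x = D (P - K) k x + 2 * x" for x
    using poly_higher_pderiv_add_monom[of k P x] by (simp add: D_def K_def)
  have "degree (P - K) \<le> Suc k"
    using P degree_diff_le[of P "Suc k" K] by (simp add: K_def degree_monom_le)
  define c where "c = coeff ((pderiv ^^ Suc k) (P - K)) 0"
  have "(pderiv ^^ Suc k) (P - K) = [:c:]"
    unfolding c_def using \<open>degree (P - K) \<le> Suc k\<close> by (rule higher_pderiv_degree_le_const)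
  then have peak: "D (P - K) (Suc k) x = c - (deriv ^^ Suc k) T x" for x
    unfolding D_def by simp
  have "(pderiv ^^ Suc (Suc k)) (P - K) = 0"
    using \<open>degree (P - K) \<le> Suc k\<close> by (intro higher_pderiv_eq_0) linarith
  then have peak_deriv: "D (P - K) (Suc (Suc k)) x = - (deriv ^^ Suc (Suc k)) T x" for x
    unfolding D_def by simp
  show ?thesis
  proof (unfold_locales, fold D_def)
    show "0 < b / (4 * Suc k)" using b by simp
    show "real (Suc k) * (b / (4 * Suc k)) = b / 4"
      by (simp add: field_simps del: of_nat_Suc) (simp add: algebra_simps)
    show "(D (P - K) j has_real_derivative D (P - K) (Suc j) x) (at x)"
      "(D (P + K) j has_real_derivative D (P + K) (Suc j) x) (at x)" for j x
      by (rule D_deriv)+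
    show "\<bar>D (P - K) 0 x\<bar> \<le> \<epsilon>" if "-b \<le> x" "x \<le> 0" for x
      using approx[of x] that by (cases "x = 0") (auto simp: D_def K F)
    show "\<bar>D (P + K) 0 x\<bar> \<le> \<epsilon>" if "0 \<le> x" "x \<le> b" for x
      using approx[of x] that by (auto simp: D_def K F)
    show "D (P + K) k x = D (P - K) k x + 2 * x" for x by (rule corner)
    show "trig_poly n (D (P - K) (Suc k))"
      using trig_poly_affine[OF trig_poly_higher_deriv(1)[OF T, of "Suc k"], of "-1" c] by (simp add: peak[abs_def])
    have deriv_sign: "t * D (P - K) (Suc (Suc k)) t \<le> 0" if "\<bar>t\<bar> \<le> b" for t
      using sign[OF that] by (simp add: peak_deriv)
    show "mono_on {-b..0} (D (P - K) (Suc k))" "antimono_on {0..b} (D (P - K) (Suc k))"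
      using mono_on_antimono_on_of_deriv_sign[OF D_deriv deriv_sign] by auto
  qed (use b n in auto)
qed

lemma approx_F_lower_bound:
  assumes "r \<ge> 1" "0 < b" "b \<le> pi" "n \<ge> 1" "trig_poly n T"
    and "\<And>t. \<bar>t\<bar> \<le> b \<Longrightarrow> 0 \<le> t * (deriv ^^ Suc r) T t" "degree P \<le> r"
    and "\<And>x. \<bar>x\<bar> \<le> b \<Longrightarrow> \<bar>F r x + poly P x - T x\<bar> \<le> \<epsilon>"
  shows "(b / (4 * r)) ^ r \<le> 660 * 2 ^ (r + 1) * n * \<epsilon>"
proof -
  obtain k where r: "r = Suc k" using assms(1) by (cases r) auto
  have "kink_approx b (b / (4 * r)) \<epsilon> n k
      (\<lambda>j x. poly ((pderiv ^^ j) (P - monom (1 / fact r) r)) x - (deriv ^^ j) T x)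
      (\<lambda>j x. poly ((pderiv ^^ j) (P + monom (1 / fact r) r)) x - (deriv ^^ j) T x)"
    using assms unfolding r by (intro kink_approx_branches) auto
  then show ?thesis using kink_approx.lower_bound unfolding r by fastforce
qed

theorem lemma4p2:
  fixes r :: nat
  assumes "r \<ge> 1"
  shows "\<exists>c3 > 0. \<forall>b (n::nat) T (P :: real poly).
           0 < b \<and> b \<le> pi \<and> n \<ge> 1 \<and> trig_poly n T
           \<and> (\<forall>t. \<bar>t\<bar> \<le> b \<longrightarrow> t * (deriv ^^ Suc r) T t \<ge> 0)
           \<and> degree P \<le> r
           \<longrightarrow> real n * sup_norm_on (-b) b (\<lambda>x. F r x + poly P x - T x) \<ge> c3 * b ^ r"
proof (intro exI[of _ "1 / (660 * 2 ^ (r + 1) * (4 * real r) ^ r)"] conjI allI impI)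
  show "0 < 1 / (660 * 2 ^ (r + 1) * (4 * real r) ^ r)" using assms by simp
  fix b :: real and n :: nat and T :: "real \<Rightarrow> real" and P :: "real poly"
  assume H: "0 < b \<and> b \<le> pi \<and> n \<ge> 1 \<and> trig_poly n T
    \<and> (\<forall>t. \<bar>t\<bar> \<le> b \<longrightarrow> t * (deriv ^^ Suc r) T t \<ge> 0) \<and> degree P \<le> r"
  define G where "G x = F r x + poly P x - T x" for x
  have "continuous_on {-b..b} G"
    unfolding G_def F_def using H trig_poly_continuous by (auto intro!: continuous_intros)
  then have "\<bar>G x\<bar> \<le> sup_norm_on (-b) b G" if "\<bar>x\<bar> \<le> b" for x
    using that by (intro abs_le_sup_norm_on) auto
  then have "(b / (4 * r)) ^ r \<le> 660 * 2 ^ (r + 1) * n * sup_norm_on (-b) b G"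
    using H by (intro approx_F_lower_bound[OF assms]) (auto simp: G_def)
  moreover have "1 / (660 * 2 ^ (r + 1) * (4 * real r) ^ r) * b ^ r
      = (b / (4 * r)) ^ r / (660 * 2 ^ (r + 1))"
    by (simp add: power_divide)
  ultimately show "1 / (660 * 2 ^ (r + 1) * (4 * real r) ^ r) * b ^ r \<le> real n * sup_norm_on (-b) b G"
    by (simp add: pos_divide_le_eq mult_ac)
qed

end
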